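(* Let $N$ be an $m\times n$ matrix with $m,n\ge 3$ which is a (totally unimodular) compact representation matrix of a $3$-connected regular matroid. If $N$ contains, up to row and column permutations and scaling of rows and columns by $-1$, the submatrix $\begin{bmatrix}1&1\\1&1\end{bmatrix}$, then $N$ is not strongly unimodular.
   Context: A real matrix is totally unimodular (TU) if every square submatrix has determinant $0$, $+1$ or $-1$. A matrix $A$ is strongly unimodular (SU) if (i) $A$ is TU, and (ii) every matrix obtained from $A$ by setting a single $\pm1$ entry to $0$ is also TU. A compact representation matrix of a matroid $M$ over $\mathbb R$ is a matrix $A$ with $m$ rows such that $M$ is the column matroid of $[I_m\,|\,A]$. *)

theory Defs
  imports "Jordan_Normal_Form.Determinant" "Jordan_Normal_Form.DL_Submatrix"
begin

definition totally_unimodular :: "real mat \<Rightarrow> bool" where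
  "totally_unimodular A \<longleftrightarrow>
     (\<forall>I J. I \<subseteq> {..<dim_row A} \<longrightarrow> J \<subseteq> {..<dim_col A} \<longrightarrow> card I = card J \<longrightarrow>
        det (submatrix A I J) \<in> {-1, 0, 1})"

definition zero_entry :: "real mat \<Rightarrow> nat \<Rightarrow> nat \<Rightarrow> real mat" where
  "zero_entry A i j = mat (dim_row A) (dim_col A) (\<lambda>(k,l). if (k,l) = (i,j) then 0 else A $$ (k,l))"

definition strongly_unimodular :: "real mat \<Rightarrow> bool" where
  "strongly_unimodular A \<longleftrightarrow> totally_unimodular A \<and>
     (\<forall>i<dim_row A. \<forall>j<dim_col A. A $$ (i,j) \<in> {1, -1} \<longrightarrow> totally_unimodular (zero_entry A i j))"

definition id_append :: "real mat \<Rightarrow> real mat" where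
  "id_append A = mat (dim_row A) (dim_row A + dim_col A)
     (\<lambda>(i,j). if j < dim_row A then (if i = j then 1 else 0) else A $$ (i, j - dim_row A))"

text \<open>Column matroid over the reals: independence of a set of column indices.\<close>
definition col_indep :: "real mat \<Rightarrow> nat set \<Rightarrow> bool" where
  "col_indep B X \<longleftrightarrow> X \<subseteq> {..<dim_col B} \<and>
     (\<forall>c :: nat \<Rightarrow> real. (\<forall>i<dim_row B. (\<Sum>j\<in>X. c j * B $$ (i,j)) = 0) \<longrightarrow> (\<forall>j\<in>X. c j = 0))"

definition col_rank :: "real mat \<Rightarrow> nat set \<Rightarrow> nat" where
  "col_rank B X = Max {card Y | Y. Y \<subseteq> X \<and> col_indep B Y}"

definition k_separation :: "real mat \<Rightarrow> nat \<Rightarrow> nat set \<Rightarrow> bool" where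
  "k_separation B k X \<longleftrightarrow> (let E = {..<dim_col B} in
     X \<subseteq> E \<and> card X \<ge> k \<and> card (E - X) \<ge> k \<and>
     int (col_rank B X) + int (col_rank B (E - X)) - int (col_rank B E) < int k)"

definition matroid_connected :: "nat \<Rightarrow> real mat \<Rightarrow> bool" where
  "matroid_connected n B \<longleftrightarrow> (\<forall>k. 1 \<le> k \<and> k < n \<longrightarrow> (\<nexists>X. k_separation B k X))"

end

theory Submission
  imports Defs
begin

(* Assume N is strongly unimodular.  Enlarge the given 2x2 block of nonzero
   entries to a maximal block R x C of nonzero entries.  Rows outside R split into R1 (some
   nonzero entry in a column of C) and R0 (zero on C); by maximality every row of R1 still has
   a zero in C.  Columns outside C split dually into C1 and C0.  Walk from R1 along nonzero
   entries, alternately through columns of C0 and rows of R0.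
   (a) If no walk reaches a nonzero entry in a column of C1 (no "bridge"), the reached rows
       together with C and the reached columns form a 2-separation of the column matroid of
       [I | N]; the rank count uses that R x C has rank one (a TU matrix has no 2x2 minor
       with four entries +-1 and determinant +-2).  This contradicts 3-connectivity.
   (b) Otherwise a shortest bridge is a chordless path.  Closing it through two rows a, b of R
       and two columns c, d of C gives a square submatrix of N which, after setting the entry
       (a,c) to zero, has determinant +-2, contradicting strong unimodularity. *)

section \<open>Square minors indexed by maps\<close>

text \<open>The K x K matrix with entries A(fr i, fc j).  Unlike submatrix it allows rows and columns
  in any order, which is what Laplace expansions along a path require.\<close>
definition sq_minor :: "'a mat \<Rightarrow> nat \<Rightarrow> (nat \<Rightarrow> nat) \<Rightarrow> (nat \<Rightarrow> nat) \<Rightarrow> 'a mat" where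
  "sq_minor A K fr fc = mat K K (\<lambda>(i,j). A $$ (fr i, fc j))"

lemma sq_minor_carrier [simp]: "sq_minor A K fr fc \<in> carrier_mat K K"
  by (simp add: sq_minor_def)

lemma sq_minor_dim [simp]: "dim_row (sq_minor A K fr fc) = K" "dim_col (sq_minor A K fr fc) = K"
  by (simp_all add: sq_minor_def)

lemma sq_minor_index [simp]: "i < K \<Longrightarrow> j < K \<Longrightarrow> sq_minor A K fr fc $$ (i,j) = A $$ (fr i, fc j)"
  by (simp add: sq_minor_def)

lemma sq_minor_cong:
  "(\<And>i. i < K \<Longrightarrow> fr i = fr' i) \<Longrightarrow> (\<And>j. j < K \<Longrightarrow> fc j = fc' j) \<Longrightarrow>
   sq_minor A K fr fc = sq_minor A K fr' fc'"
  unfolding sq_minor_def by (rule eq_matI) auto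

text \<open>Listing the image of an injective map in increasing order: sending i to the rank of fr i
  within the image is a permutation of the positions, and pick recovers fr.\<close>
lemma rank_in_image_permutes:
  assumes inj: "inj_on fr {..<K}"
  defines "I \<equiv> fr ` {..<K}"
  defines "p \<equiv> (\<lambda>i. if i < K then card {x\<in>I. x < fr i} else i)"
  shows "p permutes {0..<K}" and "\<And>i. i < K \<Longrightarrow> pick I (p i) = fr i"
proof -
  have cI: "card I = K" unfolding I_def using card_image[OF inj] by simp
  have fI: "finite I" unfolding I_def by simp
  show pick_p: "\<And>i. i < K \<Longrightarrow> pick I (p i) = fr i"
    unfolding p_def using pick_card_in_set[of _ I] I_def by auto
  have p_lt: "p i < K" if "i < K" for i
  proof -
    have "{x\<in>I. x < fr i} \<subset> I" using that I_def by auto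
    then have "card {x\<in>I. x < fr i} < card I" using fI psubset_card_mono by blast
    then show ?thesis unfolding p_def using cI that by simp
  qed
  have inj_p: "inj_on p {0..<K}"
  proof (rule inj_onI)
    fix x y assume "x \<in> {0..<K}" "y \<in> {0..<K}" "p x = p y"
    then have "fr x = fr y" using pick_p by (metis atLeastLessThan_iff)
    then show "x = y" using inj \<open>x \<in> {0..<K}\<close> \<open>y \<in> {0..<K}\<close> by (auto dest: inj_onD)
  qed
  have "p ` {0..<K} \<subseteq> {0..<K}" using p_lt by auto
  then have "p ` {0..<K} = {0..<K}" using endo_inj_surj[OF _ _ inj_p] by auto
  then have "bij_betw p {0..<K} {0..<K}" using inj_p by (simp add: bij_betw_def)
  then show "p permutes {0..<K}" by (rule bij_imp_permutes) (simp add: p_def)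
qed

text \<open>A square minor differs from the corresponding submatrix only by a row and a column
  permutation, so their determinants agree up to sign.\<close>
lemma abs_det_sq_minor:
  fixes A :: "'a :: linordered_idom mat"
  assumes inj_r: "inj_on fr {..<K}" and inj_c: "inj_on fc {..<K}"
    and rows: "fr ` {..<K} \<subseteq> {..<dim_row A}" and cols: "fc ` {..<K} \<subseteq> {..<dim_col A}"
  shows "\<bar>det (sq_minor A K fr fc)\<bar> = \<bar>det (submatrix A (fr ` {..<K}) (fc ` {..<K}))\<bar>"
proof -
  define I where "I = fr ` {..<K}"
  define J where "J = fc ` {..<K}"
  define p where "p = (\<lambda>i. if i < K then card {x\<in>I. x < fr i} else i)"
  define q where "q = (\<lambda>i. if i < K then card {x\<in>J. x < fc i} else i)"
  note P = rank_in_image_permutes[OF inj_r, folded I_def p_def]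
  note Q = rank_in_image_permutes[OF inj_c, folded J_def q_def]
  have rows_I: "{i. i < dim_row A \<and> i \<in> I} = I" using rows I_def by auto
  have cols_J: "{i. i < dim_col A \<and> i \<in> J} = J" using cols J_def by auto
  have cI: "card I = K" unfolding I_def using card_image[OF inj_r] by simp
  have cJ: "card J = K" unfolding J_def using card_image[OF inj_c] by simp
  define S where "S = submatrix A I J"
  have S: "S \<in> carrier_mat K K" unfolding S_def submatrix_def rows_I cols_J cI cJ by simp
  have p_perm: "p permutes {0..<K}" unfolding p_def by (rule P(1))
  have q_perm: "q permutes {0..<K}" unfolding q_def by (rule Q(1))
  have p_lt: "p i < K" if "i < K" for i using permutes_in_image[OF p_perm, of i] that by simp
  have q_lt: "q i < K" if "i < K" for i using permutes_in_image[OF q_perm, of i] that by simp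
  define T where "T = mat K K (\<lambda>(i,j). S $$ (i, q j))"
  have T: "T \<in> carrier_mat K K" by (simp add: T_def)
  have minor_eq: "sq_minor A K fr fc = mat K K (\<lambda>(i,j). T $$ (p i, j))"
  proof (rule eq_matI)
    fix i j assume "i < dim_row (mat K K (\<lambda>(i,j). T $$ (p i, j)))"
      "j < dim_col (mat K K (\<lambda>(i,j). T $$ (p i, j)))"
    then have ij: "i < K" "j < K" by auto
    have "T $$ (p i, j) = S $$ (p i, q j)" using p_lt q_lt ij T_def by simp
    also have "\<dots> = A $$ (pick I (p i), pick J (q j))" unfolding S_def
      by (rule submatrix_index, simp_all add: rows_I cols_J cI cJ p_lt q_lt ij)
    also have "\<dots> = A $$ (fr i, fc j)" using P(2) Q(2) ij by (simp add: p_def q_def)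
    finally show "sq_minor A K fr fc $$ (i, j) = mat K K (\<lambda>(i,j). T $$ (p i, j)) $$ (i, j)"
      using ij by simp
  qed auto
  have det_rows: "det (sq_minor A K fr fc) = signof p * det T" unfolding minor_eq
    by (rule det_permute_rows[OF T p_perm])
  have T_transp: "T = transpose_mat (mat K K (\<lambda>(i,j). transpose_mat S $$ (q i, j)))"
    by (rule eq_matI, insert S q_lt, auto simp: T_def)
  have "det T = det (mat K K (\<lambda>(i,j). transpose_mat S $$ (q i, j)))"
    unfolding T_transp by (intro det_transpose[of _ K], simp)
  also have "\<dots> = signof q * det (transpose_mat S)"
    by (rule det_permute_rows[OF _ q_perm], insert S, auto)
  also have "\<dots> = signof q * det S" using det_transpose[OF S] by simp
  finally have "det (sq_minor A K fr fc) = signof p * signof q * det S" using det_rows by simp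
  then show ?thesis unfolding S_def I_def J_def by (simp add: abs_mult sign_def)
qed

lemma sq_minor_delete:
  "mat_delete (sq_minor A (Suc K) fr fc) i j =
   sq_minor A K (\<lambda>t. fr (insert_index i t)) (\<lambda>t. fc (insert_index j t))"
  unfolding mat_delete_def sq_minor_def insert_index_def by (rule eq_matI) auto

lemma det_sq_minor_expand_row:
  assumes "i < Suc K"
  shows "det (sq_minor A (Suc K) fr fc) = (\<Sum>j<Suc K. A $$ (fr i, fc j) *
           ((-1)^(i+j) * det (sq_minor A K (\<lambda>t. fr (insert_index i t)) (\<lambda>t. fc (insert_index j t)))))"
  by (subst laplace_expansion_row[OF sq_minor_carrier assms])
    (simp add: cofactor_def sq_minor_delete assms)

lemma det_sq_minor_expand_col:
  assumes "j < Suc K"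
  shows "det (sq_minor A (Suc K) fr fc) = (\<Sum>i<Suc K. A $$ (fr i, fc j) *
           ((-1)^(i+j) * det (sq_minor A K (\<lambda>t. fr (insert_index i t)) (\<lambda>t. fc (insert_index j t)))))"
  by (subst laplace_expansion_column[OF sq_minor_carrier assms])
    (simp add: cofactor_def sq_minor_delete assms)

lemma det_sq_minor_1: "det (sq_minor A (Suc 0) fr fc) = A $$ (fr 0, fc 0)"
  by (subst det_single) auto

lemma det_sq_minor_2:
  "det (sq_minor A 2 fr fc) = A $$ (fr 0, fc 0) * A $$ (fr 1, fc 1) - A $$ (fr 0, fc 1) * A $$ (fr 1, fc 0)"
  using det_sq_minor_expand_row[of 0 1 A fr fc]
  by (simp add: det_sq_minor_1 insert_index_def numeral_2_eq_2)

lemma zero_entry_index: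
  "k < dim_row A \<Longrightarrow> l < dim_col A \<Longrightarrow>
   zero_entry A i j $$ (k,l) = (if (k,l) = (i,j) then 0 else A $$ (k,l))"
  by (simp add: zero_entry_def)

lemma zero_entry_dim [simp]:
  "dim_row (zero_entry A i j) = dim_row A" "dim_col (zero_entry A i j) = dim_col A"
  by (simp_all add: zero_entry_def)

lemma sq_minor_zero_entry:
  assumes "\<And>t. t < K \<Longrightarrow> fr t \<noteq> a" "\<And>t. t < K \<Longrightarrow> fr t < dim_row A"
    "\<And>t. t < K \<Longrightarrow> fc t < dim_col A"
  shows "sq_minor (zero_entry A a c) K fr fc = sq_minor A K fr fc"
  by (rule eq_matI) (use assms in \<open>auto simp: zero_entry_index\<close>)

section \<open>Consequences of total unimodularity\<close>

lemma TU_det_sq_minor: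
  assumes "totally_unimodular A" "inj_on fr {..<K}" "inj_on fc {..<K}"
    "fr ` {..<K} \<subseteq> {..<dim_row A}" "fc ` {..<K} \<subseteq> {..<dim_col A}"
  shows "det (sq_minor A K fr fc) \<in> {-1,0,1}"
proof -
  have "card (fr ` {..<K}) = card (fc ` {..<K})" using assms(2,3) by (simp add: card_image)
  then have "det (submatrix A (fr ` {..<K}) (fc ` {..<K})) \<in> {-1,0,1}"
    using assms(1,4,5) unfolding totally_unimodular_def by blast
  then show ?thesis using abs_det_sq_minor[OF assms(2-5)] by (auto simp: abs_if split: if_splits)
qed

lemma TU_entry:
  assumes "totally_unimodular A" "i < dim_row A" "j < dim_col A"
  shows "A $$ (i,j) \<in> {-1,0,1}"
proof -
  have "det (sq_minor A 1 (\<lambda>_. i) (\<lambda>_. j)) \<in> {-1,0,1}"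
    by (rule TU_det_sq_minor[OF assms(1)]) (use assms in \<open>auto simp: inj_on_def\<close>)
  then show ?thesis using det_sq_minor_1[of A "\<lambda>_. i" "\<lambda>_. j"] by simp
qed

text \<open>Four nonzero entries of a TU matrix in two rows and two columns form a rank-one 2x2
  matrix: a nonzero determinant would be a sum of two terms +-1, hence +-2.\<close>
lemma TU_nonzero_2x2_rank_one:
  assumes "totally_unimodular A" "i < dim_row A" "i' < dim_row A" "j < dim_col A" "j' < dim_col A"
    "A $$ (i,j) \<noteq> 0" "A $$ (i',j) \<noteq> 0" "A $$ (i,j') \<noteq> 0" "A $$ (i',j') \<noteq> 0"
  shows "A $$ (i,j) * A $$ (i',j') = A $$ (i',j) * A $$ (i,j')"
proof (cases "i = i' \<or> j = j'")
  case True then show ?thesis by auto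
next
  case False
  define fr where "fr = (\<lambda>t::nat. if t = 0 then i else i')"
  define fc where "fc = (\<lambda>t::nat. if t = 0 then j else j')"
  have "inj_on fr {..<2}" "inj_on fc {..<2}" using False unfolding fr_def fc_def inj_on_def by auto
  moreover have "fr ` {..<2} \<subseteq> {..<dim_row A}" "fc ` {..<2} \<subseteq> {..<dim_col A}"
    using assms unfolding fr_def fc_def by auto
  ultimately have det_TU: "det (sq_minor A 2 fr fc) \<in> {-1,0,1}"
    using TU_det_sq_minor[OF assms(1)] by blast
  have "det (sq_minor A 2 fr fc) = A $$ (i,j) * A $$ (i',j') - A $$ (i,j') * A $$ (i',j)"
    by (simp add: det_sq_minor_2 fr_def fc_def)
  moreover have "A $$ (i,j) \<in> {-1,1}" "A $$ (i',j) \<in> {-1,1}" "A $$ (i,j') \<in> {-1,1}" "A $$ (i',j') \<in> {-1,1}"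
    using TU_entry[OF assms(1)] assms by fastforce+
  ultimately show ?thesis using det_TU by auto
qed

section \<open>Rank bounds in column matroids\<close>

text \<open>A homogeneous linear system with fewer equations (indexed by L) than unknowns
  (indexed by Y) has a nontrivial solution; proved by Gaussian elimination of one equation.\<close>
lemma homogeneous_system_nontrivial_solution:
  fixes \<alpha> :: "'y \<Rightarrow> 'l \<Rightarrow> real"
  assumes "finite L" "finite Y" "card L < card Y"
  shows "\<exists>c. (\<forall>l\<in>L. (\<Sum>y\<in>Y. c y * \<alpha> y l) = 0) \<and> (\<exists>y\<in>Y. c y \<noteq> 0)"
  using assms
proof (induction L arbitrary: Y \<alpha> rule: finite_induct)
  case empty
  then have "Y \<noteq> {}" by auto
  then show ?case by (intro exI[of _ "\<lambda>_. 1"]) auto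
next
  case (insert l0 L)
  show ?case
  proof (cases "\<forall>y\<in>Y. \<alpha> y l0 = 0")
    case True
    from insert.prems insert.hyps have "card L < card Y" by simp
    from insert.IH[OF insert.prems(1) this, of \<alpha>] obtain c where
      c: "\<forall>l\<in>L. (\<Sum>y\<in>Y. c y * \<alpha> y l) = 0" "\<exists>y\<in>Y. c y \<noteq> 0" by blast
    have "(\<Sum>y\<in>Y. c y * \<alpha> y l0) = 0" using True by simp
    then show ?thesis using c by auto
  next
    case False
    then obtain y0 where y0: "y0 \<in> Y" "\<alpha> y0 l0 \<noteq> 0" by auto
    define Y' where "Y' = Y - {y0}"
    define a where "a = \<alpha> y0 l0"
    define \<alpha>' where "\<alpha>' = (\<lambda>y l. \<alpha> y l - \<alpha> y l0 / a * \<alpha> y0 l)"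
    have fin_Y': "finite Y'" using insert.prems Y'_def by simp
    have "card Y' = card Y - 1" using Y'_def y0 insert.prems by simp
    then have "card L < card Y'" using insert.prems insert.hyps by simp
    from insert.IH[OF fin_Y' this, of \<alpha>'] obtain c' where
      c': "\<forall>l\<in>L. (\<Sum>y\<in>Y'. c' y * \<alpha>' y l) = 0" "\<exists>y\<in>Y'. c' y \<noteq> 0" by blast
    define S where "S = (\<Sum>y\<in>Y'. c' y * \<alpha> y l0)"
    define c where "c = (\<lambda>y. if y = y0 then - S / a else c' y)"
    have split_sum: "(\<Sum>y\<in>Y. c y * \<alpha> y l) = c y0 * \<alpha> y0 l + (\<Sum>y\<in>Y'. c' y * \<alpha> y l)" for l
    proof -
      have "(\<Sum>y\<in>Y. c y * \<alpha> y l) = c y0 * \<alpha> y0 l + (\<Sum>y\<in>Y'. c y * \<alpha> y l)"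
        unfolding Y'_def using y0 insert.prems(1) by (simp add: sum.remove)
      also have "(\<Sum>y\<in>Y'. c y * \<alpha> y l) = (\<Sum>y\<in>Y'. c' y * \<alpha> y l)"
        by (rule sum.cong) (auto simp: c_def Y'_def)
      finally show ?thesis .
    qed
    have a0: "a \<noteq> 0" using y0 a_def by simp
    have "(\<Sum>y\<in>Y. c y * \<alpha> y l) = 0" if "l \<in> insert l0 L" for l
    proof (cases "l = l0")
      case True
      then show ?thesis using split_sum[of l0] a0 by (simp add: c_def S_def a_def)
    next
      case False
      then have lL: "l \<in> L" using that by simp
      have "(\<Sum>y\<in>Y'. c' y * \<alpha> y l) = (\<Sum>y\<in>Y'. c' y * \<alpha>' y l + (c' y * \<alpha> y l0) * (\<alpha> y0 l / a))"
        by (rule sum.cong) (auto simp: \<alpha>'_def algebra_simps)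
      also have "\<dots> = (\<Sum>y\<in>Y'. c' y * \<alpha>' y l) + S * (\<alpha> y0 l / a)"
        by (simp add: sum.distrib S_def sum_distrib_right sum_divide_distrib)
      also have "\<dots> = S * (\<alpha> y0 l / a)" using c'(1) lL by simp
      finally show ?thesis using split_sum[of l] a0 by (simp add: c_def)
    qed
    moreover have "\<exists>y\<in>Y. c y \<noteq> 0" using c'(2) unfolding c_def Y'_def by auto
    ultimately show ?thesis by blast
  qed
qed

lemma col_indep_card_le_generators:
  fixes \<alpha> :: "nat \<Rightarrow> 'l \<Rightarrow> real"
  assumes "col_indep B Y" "finite L"
    "\<And>y i. y \<in> Y \<Longrightarrow> i < dim_row B \<Longrightarrow> B $$ (i,y) = (\<Sum>l\<in>L. \<alpha> y l * g l i)"
  shows "card Y \<le> card L"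
proof (rule ccontr)
  assume "\<not> card Y \<le> card L"
  then have lt: "card L < card Y" by simp
  have fin_Y: "finite Y" using assms(1) unfolding col_indep_def using finite_subset by blast
  obtain c where c: "\<forall>l\<in>L. (\<Sum>y\<in>Y. c y * \<alpha> y l) = 0" "\<exists>y\<in>Y. c y \<noteq> 0"
    using homogeneous_system_nontrivial_solution[OF assms(2) fin_Y lt, of \<alpha>] by blast
  have "(\<Sum>j\<in>Y. c j * B $$ (i,j)) = 0" if "i < dim_row B" for i
  proof -
    have "(\<Sum>j\<in>Y. c j * B $$ (i,j)) = (\<Sum>j\<in>Y. \<Sum>l\<in>L. c j * (\<alpha> j l * g l i))"
      using assms(3) that by (simp add: sum_distrib_left)
    also have "\<dots> = (\<Sum>l\<in>L. (\<Sum>j\<in>Y. c j * \<alpha> j l) * g l i)"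
      by (subst sum.swap) (simp add: sum_distrib_right mult.assoc)
    also have "\<dots> = 0" using c(1) by simp
    finally show ?thesis .
  qed
  then have "\<forall>j\<in>Y. c j = 0" using assms(1) unfolding col_indep_def by blast
  then show False using c(2) by auto
qed

lemma finite_indep_cards: "finite X \<Longrightarrow> finite {card Y | Y. Y \<subseteq> X \<and> col_indep B Y}"
proof -
  assume "finite X"
  have "{card Y | Y. Y \<subseteq> X \<and> col_indep B Y} \<subseteq> card ` Pow X" by auto
  then show ?thesis using \<open>finite X\<close> finite_subset by blast
qed

lemma col_rank_le_generators:
  fixes \<alpha> :: "nat \<Rightarrow> 'l \<Rightarrow> real"
  assumes "finite X" "finite L"
    "\<And>y i. y \<in> X \<Longrightarrow> i < dim_row B \<Longrightarrow> B $$ (i,y) = (\<Sum>l\<in>L. \<alpha> y l * g l i)"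
  shows "col_rank B X \<le> card L"
proof -
  have "col_indep B {}" unfolding col_indep_def by simp
  then have nonempty: "{card Y | Y. Y \<subseteq> X \<and> col_indep B Y} \<noteq> {}" by blast
  have "card Y \<le> card L" if "Y \<subseteq> X" "col_indep B Y" for Y
    by (rule col_indep_card_le_generators[OF that(2) assms(2), where \<alpha> = \<alpha> and g = g])
      (use assms(3) that(1) in blast)
  then show ?thesis
    unfolding col_rank_def using Max_le_iff[OF finite_indep_cards[OF assms(1)] nonempty] by blast
qed

lemma col_rank_ge:
  assumes "finite X" "Y \<subseteq> X" "col_indep B Y"
  shows "card Y \<le> col_rank B X"
  unfolding col_rank_def by (rule Max_ge[OF finite_indep_cards[OF assms(1)]]) (use assms in blast)

lemma sum_delta_mult:
  "finite S \<Longrightarrow> (\<Sum>l\<in>S. f l * (if i = l then 1 else (0::real))) = (if i \<in> S then f i else 0)"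
  by (simp add: if_distrib[of "\<lambda>x. _ * x"] cong: if_cong)

lemma id_append_index:
  "i < dim_row A \<Longrightarrow> y < dim_row A + dim_col A \<Longrightarrow> id_append A $$ (i,y) =
   (if y < dim_row A then (if i = y then 1 else 0) else A $$ (i, y - dim_row A))"
  by (simp add: id_append_def)

text \<open>The identity part of [I | A] is independent, so the whole ground set has rank at least
  the number of rows.\<close>
lemma col_rank_id_append:
  "dim_row A \<le> col_rank (id_append A) {..<dim_row A + dim_col A}"
proof -
  let ?B = "id_append A" and ?m = "dim_row A"
  have "col_indep ?B {..<?m}" unfolding col_indep_def
  proof (intro conjI allI impI ballI)
    show "{..<?m} \<subseteq> {..<dim_col ?B}" by (simp add: id_append_def)
    fix c :: "nat \<Rightarrow> real" and j
    assume h: "\<forall>i<dim_row ?B. (\<Sum>j\<in>{..<?m}. c j * ?B $$ (i, j)) = 0" "j \<in> {..<?m}"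
    have "(\<Sum>l\<in>{..<?m}. c l * ?B $$ (j, l)) = (\<Sum>l\<in>{..<?m}. c l * (if j = l then 1 else 0))"
      by (rule sum.cong) (use h(2) in \<open>auto simp: id_append_index\<close>)
    also have "\<dots> = c j" using h(2) by (subst sum_delta_mult) auto
    finally show "c j = 0" using h by (auto simp: id_append_def)
  qed
  then have "card {..<?m} \<le> col_rank ?B {..<?m + dim_col A}" by (rule col_rank_ge[rotated 2]) auto
  then show ?thesis by simp
qed

section \<open>A maximal block of nonzero entries\<close>

locale maximal_block =
  fixes N :: "real mat" and m n :: nat and R C :: "nat set"
  assumes carrier: "N \<in> carrier_mat m n"
    and TU: "totally_unimodular N"
    and R_sub: "R \<subseteq> {..<m}" and C_sub: "C \<subseteq> {..<n}"
    and R_card: "2 \<le> card R" and C_card: "2 \<le> card C"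
    and block_nz: "\<And>i j. i \<in> R \<Longrightarrow> j \<in> C \<Longrightarrow> N $$ (i,j) \<noteq> 0"
    and R_maximal: "\<And>i. i < m \<Longrightarrow> i \<notin> R \<Longrightarrow> \<exists>j\<in>C. N $$ (i,j) = 0"
    and C_maximal: "\<And>j. j < n \<Longrightarrow> j \<notin> C \<Longrightarrow> \<exists>i\<in>R. N $$ (i,j) = 0"
begin

lemma dim_N [simp]: "dim_row N = m" "dim_col N = n"
  using carrier by auto

lemma nonzero_entry_pm1: "i < m \<Longrightarrow> j < n \<Longrightarrow> N $$ (i,j) \<noteq> 0 \<Longrightarrow> N $$ (i,j) \<in> {1,-1}"
  using TU_entry[OF TU] by fastforce

lemma block_rank_one:
  assumes "i \<in> R" "j \<in> C" "a0 \<in> R" "c0 \<in> C"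
  shows "N $$ (i,j) = N $$ (a0,j) / N $$ (a0,c0) * N $$ (i,c0)"
proof -
  have "N $$ (i,j) * N $$ (a0,c0) = N $$ (a0,j) * N $$ (i,c0)"
    by (rule TU_nonzero_2x2_rank_one[OF TU]) (use assms R_sub C_sub block_nz in auto)
  then show ?thesis using block_nz[OF assms(3,4)] by (simp add: field_simps)
qed

definition "R1 = {i. i < m \<and> i \<notin> R \<and> (\<exists>j\<in>C. N $$ (i,j) \<noteq> 0)}"
definition "R0 = {i. i < m \<and> i \<notin> R \<and> (\<forall>j\<in>C. N $$ (i,j) = 0)}"
definition "C1 = {j. j < n \<and> j \<notin> C \<and> (\<exists>i\<in>R. N $$ (i,j) \<noteq> 0)}"
definition "C0 = {j. j < n \<and> j \<notin> C \<and> (\<forall>i\<in>R. N $$ (i,j) = 0)}"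

inductive reach_row :: "nat \<Rightarrow> bool" and reach_col :: "nat \<Rightarrow> bool" where
  reach_R1: "i \<in> R1 \<Longrightarrow> reach_row i"
| reach_R0: "reach_col j \<Longrightarrow> i \<in> R0 \<Longrightarrow> N $$ (i,j) \<noteq> 0 \<Longrightarrow> reach_row i"
| reach_C0: "reach_row i \<Longrightarrow> j \<in> C0 \<Longrightarrow> N $$ (i,j) \<noteq> 0 \<Longrightarrow> reach_col j"

lemma reach_in_classes: "reach_row i \<Longrightarrow> i \<in> R1 \<union> R0" "reach_col j \<Longrightarrow> j \<in> C0"
  by (induct rule: reach_row_reach_col.inducts) auto

lemma reach_row_outside: "reach_row i \<Longrightarrow> i < m \<and> i \<notin> R"
  using reach_in_classes unfolding R1_def R0_def by blast

definition "bridge \<longleftrightarrow> (\<exists>i j. reach_row i \<and> j \<in> C1 \<and> N $$ (i,j) \<noteq> 0)"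

lemma no_bridge_zero_pattern:
  assumes no_bridge: "\<not> bridge"
  shows "\<And>i j. reach_row i \<Longrightarrow> j < n \<Longrightarrow> j \<notin> C \<Longrightarrow> \<not> reach_col j \<Longrightarrow> N $$ (i,j) = 0"
    and "\<And>i j. i < m \<Longrightarrow> \<not> reach_row i \<Longrightarrow> i \<notin> R \<Longrightarrow> j \<in> C \<or> reach_col j \<Longrightarrow> N $$ (i,j) = 0"
    and "\<And>i j. i \<in> R \<Longrightarrow> reach_col j \<Longrightarrow> N $$ (i,j) = 0"
proof -
  fix i j assume a: "reach_row i" "j < n" "j \<notin> C" "\<not> reach_col j"
  show "N $$ (i,j) = 0"
  proof (rule ccontr)
    assume ne: "N $$ (i,j) \<noteq> 0"
    show False
    proof (cases "\<forall>i\<in>R. N $$ (i,j) = 0")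
      case True
      then have "j \<in> C0" using a unfolding C0_def by auto
      then show False using reach_C0[OF a(1) _ ne] a(4) by blast
    next
      case False
      then have "j \<in> C1" using a unfolding C1_def by auto
      then show False using no_bridge a(1) ne unfolding bridge_def by blast
    qed
  qed
next
  fix i j assume a: "i < m" "\<not> reach_row i" "i \<notin> R" "j \<in> C \<or> reach_col j"
  have "i \<notin> R1" using a(2) reach_R1 by blast
  then have i_R0: "i \<in> R0" using a(1,3) unfolding R1_def R0_def by auto
  show "N $$ (i,j) = 0"
  proof (cases "j \<in> C")
    case True then show ?thesis using i_R0 unfolding R0_def by auto
  next
    case False
    then have "reach_col j" using a(4) by auto
    then show ?thesis using reach_R0[OF _ i_R0] a(2) by blast
  qed
next
  fix i j assume "i \<in> R" "reach_col j"
  then show "N $$ (i,j) = 0" using reach_in_classes(2) unfolding C0_def by auto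
qed

subsection \<open>Without a bridge, [I | N] has a 2-separation\<close>

text \<open>The separating set of columns of [I | N]: the identity columns of the reachable rows,
  and the N-columns of C and of the reachable columns (shifted by m).\<close>
definition "sep_rows = {i. reach_row i}"
definition "sep_cols = C \<union> {j. reach_col j}"
definition "sep_set = sep_rows \<union> (\<lambda>j. m + j) ` sep_cols"

lemma sep_rows_sub: "sep_rows \<subseteq> {..<m}" and sep_rows_R: "sep_rows \<inter> R = {}"
  using reach_row_outside unfolding sep_rows_def by auto

lemma sep_cols_sub: "sep_cols \<subseteq> {..<n}"
  using C_sub reach_in_classes(2) unfolding sep_cols_def C0_def by auto

lemma sep_set_sub: "sep_set \<subseteq> {..<m+n}"
  using sep_rows_sub sep_cols_sub unfolding sep_set_def by auto

lemma compl_sep_set_iff: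
  "y \<in> {..<m+n} - sep_set \<longleftrightarrow> (y < m \<and> y \<notin> sep_rows) \<or> (m \<le> y \<and> y - m < n \<and> y - m \<notin> sep_cols)"
  unfolding sep_set_def using sep_rows_sub by force

text \<open>Each column of the separating set is the sum of a vector supported on the reachable rows
  and a multiple of the fixed vector (N(i,c0) for i in R, 0 elsewhere).\<close>
lemma sep_set_column_decomp:
  assumes no_bridge: "\<not> bridge" and a0: "a0 \<in> R" and c0: "c0 \<in> C"
    and y: "y \<in> sep_set" and i: "i < m"
  shows "id_append N $$ (i,y) = (if i \<in> sep_rows then id_append N $$ (i,y) else 0) +
    (if m \<le> y \<and> y - m \<in> C then N $$ (a0, y - m) / N $$ (a0,c0) else 0) * (if i \<in> R then N $$ (i,c0) else 0)"
proof (cases "y < m")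
  case True
  then have "y \<in> sep_rows" using y unfolding sep_set_def by auto
  then show ?thesis using True i by (auto simp: id_append_index)
next
  case False
  then obtain j where j: "y = m + j" "j \<in> sep_cols"
    using y sep_rows_sub unfolding sep_set_def by auto
  have N_col: "id_append N $$ (i,y) = N $$ (i,j)"
    using i j sep_cols_sub by (auto simp: id_append_index)
  consider "i \<in> sep_rows" | "i \<notin> sep_rows" "i \<in> R" "j \<in> C" | "i \<notin> sep_rows" "i \<in> R" "j \<notin> C"
    | "i \<notin> sep_rows" "i \<notin> R" by blast
  then show ?thesis
  proof cases
    case 1 then show ?thesis using sep_rows_R by auto
  next
    case 2
    have "N $$ (i,j) = N $$ (a0,j) / N $$ (a0,c0) * N $$ (i,c0)"
      using block_rank_one[OF 2(2) _ a0 c0] 2(3) by blast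
    then show ?thesis using 2 N_col j by simp
  next
    case 3
    then have "reach_col j" using j(2) unfolding sep_cols_def by auto
    then show ?thesis using 3 N_col j no_bridge_zero_pattern(3)[OF no_bridge] by simp
  next
    case 4
    then have "N $$ (i,j) = 0" using no_bridge_zero_pattern(2)[OF no_bridge i] j(2)
      unfolding sep_rows_def sep_cols_def by auto
    then show ?thesis using 4 N_col by simp
  qed
qed

lemma rank_sep_set:
  assumes no_bridge: "\<not> bridge"
  shows "col_rank (id_append N) sep_set \<le> card sep_rows + 1"
proof -
  obtain a0 where a0: "a0 \<in> R" using R_card by (metis card.empty ex_in_conv not_numeral_le_zero)
  obtain c0 where c0: "c0 \<in> C" using C_card by (metis card.empty ex_in_conv not_numeral_le_zero)
  let ?B = "id_append N"
  define coeff where "coeff = (\<lambda>y l. if l < m then ?B $$ (l,y)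
    else if m \<le> y \<and> y - m \<in> C then N $$ (a0, y - m) / N $$ (a0,c0) else (0::real))"
  define gen where "gen = (\<lambda>l i. if l < m then (if i = l then 1 else 0)
    else if i \<in> R then N $$ (i,c0) else (0::real))"
  have fin: "finite sep_rows" using sep_rows_sub finite_subset by blast
  have m_notin: "m \<notin> sep_rows" using sep_rows_sub by auto
  have "col_rank ?B sep_set \<le> card (insert m sep_rows)"
  proof (rule col_rank_le_generators[where \<alpha> = coeff and g = gen])
    show "finite sep_set" using sep_set_sub finite_subset by blast
    show "finite (insert m sep_rows)" using fin by simp
    fix y i assume y: "y \<in> sep_set" and "i < dim_row ?B"
    then have i: "i < m" by (simp add: id_append_def)
    have "(\<Sum>l\<in>sep_rows. coeff y l * gen l i) = (\<Sum>l\<in>sep_rows. ?B $$ (l,y) * (if i = l then 1 else 0))"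
      by (rule sum.cong) (use sep_rows_sub in \<open>auto simp: coeff_def gen_def\<close>)
    also have "\<dots> = (if i \<in> sep_rows then ?B $$ (i,y) else 0)" by (rule sum_delta_mult[OF fin])
    finally show "?B $$ (i,y) = (\<Sum>l\<in>insert m sep_rows. coeff y l * gen l i)"
      using sep_set_column_decomp[OF no_bridge a0 c0 y i] m_notin fin
      by (simp add: coeff_def gen_def)
  qed
  then show ?thesis using fin m_notin by simp
qed

text \<open>Columns outside the separating set vanish on the reachable rows, so they span at most
  m - (number of reachable rows) dimensions.\<close>
lemma rank_compl_sep_set:
  assumes no_bridge: "\<not> bridge"
  shows "col_rank (id_append N) ({..<m+n} - sep_set) \<le> m - card sep_rows"
proof -
  let ?B = "id_append N"
  define L where "L = {..<m} - sep_rows"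
  have fin_L: "finite L" unfolding L_def by simp
  have zero_on_reached: "?B $$ (i,y) = 0"
    if "y \<in> {..<m+n} - sep_set" "i \<in> sep_rows" for i y
  proof (cases "y < m")
    case True then show ?thesis using that sep_rows_sub unfolding compl_sep_set_iff
      by (auto simp: id_append_index)
  next
    case False
    then have "N $$ (i, y - m) = 0"
      using that no_bridge_zero_pattern(1)[OF no_bridge, of i "y - m"] unfolding compl_sep_set_iff
      by (auto simp: sep_rows_def sep_cols_def)
    then show ?thesis using False that sep_rows_sub unfolding compl_sep_set_iff
      by (auto simp: id_append_index)
  qed
  have "col_rank ?B ({..<m+n} - sep_set) \<le> card L"
  proof (rule col_rank_le_generators[where \<alpha> = "\<lambda>y l. ?B $$ (l,y)" and g = "\<lambda>l i. if i = l then 1 else 0"])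
    fix y i assume y: "y \<in> {..<m+n} - sep_set" and "i < dim_row ?B"
    then have i: "i < m" by (simp add: id_append_def)
    show "?B $$ (i,y) = (\<Sum>l\<in>L. ?B $$ (l,y) * (if i = l then 1 else 0))"
      unfolding sum_delta_mult[OF fin_L] using zero_on_reached[OF y] i by (auto simp: L_def)
  qed (use fin_L in auto)
  moreover have "card L = m - card sep_rows"
    unfolding L_def using sep_rows_sub by (simp add: card_Diff_subset finite_subset)
  ultimately show ?thesis by simp
qed

text \<open>Both sides have at least two elements: C on one side, R on the other.\<close>
lemma sep_set_card: "2 \<le> card sep_set" and compl_sep_set_card: "2 \<le> card ({..<m+n} - sep_set)"
proof -
  have "card ((\<lambda>j. m + j) ` C) = card C" by (rule card_image) auto
  moreover have "(\<lambda>j. m + j) ` C \<subseteq> sep_set" unfolding sep_set_def sep_cols_def by auto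
  moreover have "finite sep_set" using sep_set_sub finite_subset by blast
  ultimately show "2 \<le> card sep_set" using C_card card_mono by (metis order_trans)
  have "R \<subseteq> {..<m+n} - sep_set" using R_sub sep_rows_R by (auto simp: sep_set_def)
  then have "card R \<le> card ({..<m+n} - sep_set)" by (rule card_mono[rotated]) simp
  then show "2 \<le> card ({..<m+n} - sep_set)" using R_card by linarith
qed

theorem no_bridge_not_3_connected:
  assumes no_bridge: "\<not> bridge"
  shows "\<not> matroid_connected 3 (id_append N)"
proof -
  let ?B = "id_append N"
  have "m \<le> col_rank ?B {..<m+n}" using col_rank_id_append[of N] by simp
  moreover have "card sep_rows \<le> m" using card_mono[OF _ sep_rows_sub] by simp
  ultimately have "int (col_rank ?B sep_set) + int (col_rank ?B ({..<m+n} - sep_set))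
      - int (col_rank ?B {..<m+n}) < 2"
    using rank_sep_set[OF no_bridge] rank_compl_sep_set[OF no_bridge] by linarith
  then have "k_separation ?B 2 sep_set"
    unfolding k_separation_def Let_def using sep_set_sub sep_set_card compl_sep_set_card
    by (simp add: id_append_def)
  moreover have "1 \<le> (2::nat) \<and> (2::nat) < 3" by simp
  ultimately show ?thesis unfolding matroid_connected_def by blast
qed

subsection \<open>Bridges give chordless paths\<close>

definition reach_walk :: "nat \<Rightarrow> (nat \<Rightarrow> nat) \<Rightarrow> (nat \<Rightarrow> nat) \<Rightarrow> bool" where
  "reach_walk k r s \<longleftrightarrow> r 0 \<in> R1 \<and> (\<forall>t. 0 < t \<and> t \<le> k \<longrightarrow> r t \<in> R0) \<and>
    (\<forall>t<k. s t \<in> C0 \<and> N $$ (r t, s t) \<noteq> 0 \<and> N $$ (r (Suc t), s t) \<noteq> 0)"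

lemma reach_walk_exists:
  "reach_row i \<Longrightarrow> \<exists>k r s. reach_walk k r s \<and> r k = i"
  "reach_col j \<Longrightarrow> \<exists>k r s. reach_walk k r s \<and> N $$ (r k, j) \<noteq> 0"
proof (induct rule: reach_row_reach_col.inducts)
  case (reach_R1 i)
  then show ?case by (intro exI[of _ 0] exI[of _ "\<lambda>_. i"]) (auto simp: reach_walk_def)
next
  case (reach_R0 j i)
  then obtain k r s where w: "reach_walk k r s" "N $$ (r k, j) \<noteq> 0" by blast
  define r' where "r' = r(Suc k := i)"
  define s' where "s' = s(k := j)"
  have "reach_walk (Suc k) r' s'" unfolding reach_walk_def
  proof (intro conjI allI impI)
    show "r' 0 \<in> R1" using w unfolding r'_def reach_walk_def by simp
  next
    fix t assume "0 < t \<and> t \<le> Suc k"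
    then show "r' t \<in> R0" using w reach_R0 unfolding r'_def reach_walk_def by (cases "t = Suc k") auto
  next
    fix t assume t: "t < Suc k"
    show "s' t \<in> C0" using w t reach_in_classes(2)[OF reach_R0(1)]
      unfolding s'_def reach_walk_def by (cases "t = k") auto
    show "N $$ (r' t, s' t) \<noteq> 0" using w t unfolding s'_def r'_def reach_walk_def by (cases "t = k") auto
    show "N $$ (r' (Suc t), s' t) \<noteq> 0" using w t reach_R0
      unfolding s'_def r'_def reach_walk_def by (cases "t = k") auto
  qed
  moreover have "r' (Suc k) = i" unfolding r'_def by simp
  ultimately show ?case by blast
next
  case (reach_C0 i j)
  then show ?case by blast
qed

definition bridge_path :: "nat \<Rightarrow> (nat \<Rightarrow> nat) \<Rightarrow> (nat \<Rightarrow> nat) \<Rightarrow> bool" where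
  "bridge_path K r s \<longleftrightarrow> 0 < K \<and> r 0 \<in> R1 \<and> (\<forall>t. 0 < t \<and> t < K \<longrightarrow> r t \<in> R0) \<and>
    (\<forall>t. Suc t < K \<longrightarrow> s t \<in> C0) \<and> s (K - 1) \<in> C1 \<and>
    (\<forall>t<K. N $$ (r t, s t) \<noteq> 0) \<and> (\<forall>t. Suc t < K \<longrightarrow> N $$ (r (Suc t), s t) \<noteq> 0)"

lemma bridge_path_exists:
  assumes "bridge"
  shows "\<exists>K r s. bridge_path K r s"
proof -
  obtain i g where ig: "reach_row i" "g \<in> C1" "N $$ (i,g) \<noteq> 0" using assms bridge_def by blast
  obtain k r s where w: "reach_walk k r s" "r k = i" using reach_walk_exists(1)[OF ig(1)] by blast
  have "bridge_path (Suc k) r (s(k := g))" unfolding bridge_path_def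
  proof (intro conjI allI impI)
    fix t assume t: "t < Suc k"
    show "N $$ (r t, (s(k := g)) t) \<noteq> 0" using w ig t unfolding reach_walk_def by (cases "t = k") auto
  qed (use w ig in \<open>auto simp: reach_walk_def\<close>)
  then show ?thesis by blast
qed

text \<open>A chord (a nonzero entry (r i, s j) off the diagonal and the subdiagonal) lets one skip
  the part of the path between its ends, giving a shorter bridge path.\<close>
lemma bridge_path_shortcut:
  assumes w: "bridge_path K r s" and ij: "i < K" "j < K" "j \<noteq> i" "Suc j \<noteq> i"
    and chord: "N $$ (r i, s j) \<noteq> 0"
  shows "\<exists>K' r' s'. K' < K \<and> bridge_path K' r' s'"
proof (cases "i < j")
  case True
  define d where "d = j - i"
  define K' where "K' = K - d"
  define r' where "r' = (\<lambda>t. if t \<le> i then r t else r (t + d))"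
  define s' where "s' = (\<lambda>t. if t < i then s t else s (t + d))"
  have "bridge_path K' r' s'" unfolding bridge_path_def
  proof (intro conjI allI impI)
    show "0 < K'" using True ij unfolding K'_def d_def by simp
    show "r' 0 \<in> R1" using w unfolding bridge_path_def r'_def by simp
    fix t
    show "0 < t \<and> t < K' \<Longrightarrow> r' t \<in> R0"
      using w True ij unfolding bridge_path_def r'_def K'_def d_def by auto
    show "Suc t < K' \<Longrightarrow> s' t \<in> C0"
      using w True ij unfolding bridge_path_def s'_def K'_def d_def by auto
    show "t < K' \<Longrightarrow> N $$ (r' t, s' t) \<noteq> 0"
      using w True ij chord unfolding bridge_path_def r'_def s'_def K'_def d_def
      by (cases "t < i"; cases "t = i") auto
    show "Suc t < K' \<Longrightarrow> N $$ (r' (Suc t), s' t) \<noteq> 0"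
      using w True ij unfolding bridge_path_def r'_def s'_def K'_def d_def
      by (cases "t < i") auto
  next
    have "s' (K' - 1) = s (K - 1)" using True ij unfolding s'_def K'_def d_def by auto
    then show "s' (K' - 1) \<in> C1" using w unfolding bridge_path_def by simp
  qed
  moreover have "K' < K" using True ij unfolding K'_def d_def by simp
  ultimately show ?thesis by blast
next
  case False
  then have ji: "Suc j < i" using ij by simp
  define d where "d = i - Suc j"
  define K' where "K' = K - d"
  define r' where "r' = (\<lambda>t. if t \<le> j then r t else r (t + d))"
  define s' where "s' = (\<lambda>t. if t \<le> j then s t else s (t + d))"
  have "bridge_path K' r' s'" unfolding bridge_path_def
  proof (intro conjI allI impI)
    show "0 < K'" using ji ij unfolding K'_def d_def by simp
    show "r' 0 \<in> R1" using w unfolding bridge_path_def r'_def by simp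
    fix t
    show "0 < t \<and> t < K' \<Longrightarrow> r' t \<in> R0"
      using w ji ij unfolding bridge_path_def r'_def K'_def d_def by auto
    show "Suc t < K' \<Longrightarrow> s' t \<in> C0"
      using w ji ij unfolding bridge_path_def s'_def K'_def d_def by auto
    show "t < K' \<Longrightarrow> N $$ (r' t, s' t) \<noteq> 0"
      using w ji ij unfolding bridge_path_def r'_def s'_def K'_def d_def by auto
    show "Suc t < K' \<Longrightarrow> N $$ (r' (Suc t), s' t) \<noteq> 0"
      using w ji ij chord unfolding bridge_path_def r'_def s'_def K'_def d_def
      by (cases "t < j"; cases "t = j") auto
  next
    have "s' (K' - 1) = s (K - 1)" using ji ij unfolding s'_def K'_def d_def by auto
    then show "s' (K' - 1) \<in> C1" using w unfolding bridge_path_def by simp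
  qed
  moreover have "K' < K" using ji ij unfolding K'_def d_def by simp
  ultimately show ?thesis by blast
qed

text \<open>Hence a shortest bridge path is chordless.\<close>
lemma chordless_bridge_path_exists:
  assumes "bridge"
  obtains K r s where "bridge_path K r s"
    and "\<And>i j. i < K \<Longrightarrow> j < K \<Longrightarrow> j \<noteq> i \<Longrightarrow> Suc j \<noteq> i \<Longrightarrow> N $$ (r i, s j) = 0"
proof -
  have ex: "\<exists>K r s. bridge_path K r s" using bridge_path_exists[OF assms] .
  obtain K where K: "\<exists>r s. bridge_path K r s"
    and least: "\<And>K'. K' < K \<Longrightarrow> \<not> (\<exists>r s. bridge_path K' r s)"
    using ex_has_least_nat[of "\<lambda>K. \<exists>r s. bridge_path K r s" _ id] ex by (metis id_apply not_less)
  obtain r s where w: "bridge_path K r s" using K by blast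
  have chordless: "N $$ (r i, s j) = 0" if "i < K" "j < K" "j \<noteq> i" "Suc j \<noteq> i" for i j
    by (rule ccontr) (use bridge_path_shortcut[OF w that] least in blast)
  show ?thesis by (rule that[OF w chordless])
qed

end

section \<open>Closing a chordless bridge path\<close>

text \<open>Prepending an index to a row or column map; this is how the path is extended by rows
  of R and columns of C.\<close>
definition prepend :: "nat \<Rightarrow> (nat \<Rightarrow> nat) \<Rightarrow> nat \<Rightarrow> nat" where
  "prepend x f = (\<lambda>t. if t = 0 then x else f (t - 1))"

lemma prepend_0 [simp]: "prepend x f 0 = x"
  and prepend_Suc [simp]: "prepend x f (Suc t) = f t"
  and prepend_insert_index_0 [simp]: "prepend x f (insert_index 0 t) = f t"
  by (simp_all add: prepend_def insert_index_def)

lemma insert_index_below: "t < j \<Longrightarrow> insert_index j t = t"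
  by (simp add: insert_index_def)

lemma prepend2_insert_index_1 [simp]:
  "(\<lambda>t. prepend x (prepend y f) (insert_index (Suc 0) t)) = prepend x f"
  "(\<lambda>t. prepend x (prepend y f) (insert_index 1 t)) = prepend x f"
  by (auto simp: insert_index_def prepend_def)

lemma inj_prepend:
  "inj_on f {..<K} \<Longrightarrow> x \<notin> f ` {..<K} \<Longrightarrow> inj_on (prepend x f) {..<Suc K}"
  by (auto simp: inj_on_def prepend_def less_Suc_eq_0_disj dest: inj_onD)

lemma prepend_image: "prepend x f ` {..<Suc K} = insert x (f ` {..<K})"
proof -
  have "prepend x f ` {..<Suc K} = prepend x f ` (insert 0 (Suc ` {..<K}))"
    by (simp add: lessThan_Suc_eq_insert_0)
  also have "\<dots> = insert x (f ` {..<K})" by (auto simp: image_image)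
  finally show ?thesis .
qed

lemma sum_single_term:
  "j0 < (n::nat) \<Longrightarrow> (\<And>j. j < n \<Longrightarrow> j \<noteq> j0 \<Longrightarrow> f j = 0) \<Longrightarrow> (\<Sum>j<n. f j) = (f j0 :: real)"
  by (subst sum.remove[of _ j0]) (auto intro!: sum.neutral)

lemma sum_two_terms:
  assumes "j0 < (n::nat)" "j1 < n" "j0 \<noteq> j1" "\<And>j. j < n \<Longrightarrow> j \<noteq> j0 \<Longrightarrow> j \<noteq> j1 \<Longrightarrow> f j = 0"
  shows "(\<Sum>j<n. f j) = f j0 + (f j1 :: real)"
proof -
  have "(\<Sum>j<n. f j) = f j0 + (\<Sum>j\<in>{..<n}-{j0}. f j)" by (rule sum.remove) (use assms in auto)
  also have "(\<Sum>j\<in>{..<n}-{j0}. f j) = f j1 + (\<Sum>j\<in>{..<n}-{j0}-{j1}. f j)"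
    by (rule sum.remove) (use assms in auto)
  also have "(\<Sum>j\<in>{..<n}-{j0}-{j1}. f j) = 0" by (rule sum.neutral) (use assms in auto)
  finally show ?thesis by simp
qed

lemma prod_list_pm1: "\<forall>x\<in>set xs. x \<in> {1, -1::real} \<Longrightarrow> prod_list xs \<in> {1, -1}"
  by (induction xs) auto

locale chordless_bridge = maximal_block +
  fixes K :: nat and r s :: "nat \<Rightarrow> nat"
  assumes path: "bridge_path K r s"
    and chordless: "\<And>i j. i < K \<Longrightarrow> j < K \<Longrightarrow> j \<noteq> i \<Longrightarrow> Suc j \<noteq> i \<Longrightarrow> N $$ (r i, s j) = 0"
begin

lemma K_pos: "0 < K"
  and first_row: "r 0 \<in> R1"
  and last_col: "s (K - 1) \<in> C1"
  and path_diag: "\<And>t. t < K \<Longrightarrow> N $$ (r t, s t) \<noteq> 0"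
  and path_subdiag: "\<And>t. Suc t < K \<Longrightarrow> N $$ (r (Suc t), s t) \<noteq> 0"
  using path unfolding bridge_path_def by auto

lemma path_rows: "t < K \<Longrightarrow> r t < m \<and> r t \<notin> R"
  using path first_row unfolding bridge_path_def R1_def R0_def by (cases "t = 0") auto

lemma path_row_zero: "0 < t \<Longrightarrow> t < K \<Longrightarrow> x \<in> C \<Longrightarrow> N $$ (r t, x) = 0"
  using path unfolding bridge_path_def R0_def by blast

lemma path_cols: "t < K \<Longrightarrow> s t < n \<and> s t \<notin> C"
  using path last_col unfolding bridge_path_def C1_def C0_def
  by (cases "Suc t < K") (auto dest: less_antisym)

lemma path_col_zero: "Suc t < K \<Longrightarrow> x \<in> R \<Longrightarrow> N $$ (x, s t) = 0"
  using path unfolding bridge_path_def C0_def by blast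

text \<open>Chordlessness makes rows and columns of the path distinct: a repeated row or column
  would turn a diagonal entry into a chord.\<close>
lemma path_rows_inj: "inj_on r {..<K}"
proof (rule inj_onI, rule ccontr)
  fix i j assume "i \<in> {..<K}" "j \<in> {..<K}" "r i = r j" "i \<noteq> j"
  then show False using path_diag chordless
    by (cases "i < j") (metis lessThan_iff less_not_refl2 Suc_lessD not_less_eq)+
qed

lemma path_cols_inj: "inj_on s {..<K}"
proof (rule inj_onI, rule ccontr)
  fix i j assume "i \<in> {..<K}" "j \<in> {..<K}" "s i = s j" "i \<noteq> j"
  then show False using path_diag chordless
    by (cases "i < j") (metis lessThan_iff less_not_refl2 Suc_lessD not_less_eq)+
qed

lemma prepend_row:
  "x \<in> R \<Longrightarrow> inj_on (prepend x r) {..<Suc K} \<and> prepend x r ` {..<Suc K} \<subseteq> {..<m}"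
  using path_rows R_sub by (auto intro!: inj_prepend[OF path_rows_inj] simp: prepend_image)

lemma prepend_col:
  "y \<in> C \<Longrightarrow> inj_on (prepend y s) {..<Suc K} \<and> prepend y s ` {..<Suc K} \<subseteq> {..<n}"
  using path_cols C_sub by (auto intro!: inj_prepend[OF path_cols_inj] simp: prepend_image)

text \<open>The path minor is lower triangular with diagonal entries +-1.\<close>
lemma det_path_minor: "det (sq_minor N K r s) \<in> {1,-1}"
proof -
  have "det (sq_minor N K r s) = prod_list (diag_mat (sq_minor N K r s))"
    by (rule det_lower_triangular[of K]) (use chordless in auto)
  moreover have "\<forall>x\<in>set (diag_mat (sq_minor N K r s)). x \<in> {1,-1}"
    using nonzero_entry_pm1 path_rows path_cols path_diag by (auto simp: diag_mat_def)
  ultimately show ?thesis using prod_list_pm1 by auto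
qed

text \<open>Shifting the columns by one, with a column c of C meeting r 0 in front, gives an upper
  triangular minor with diagonal entries +-1.\<close>
lemma det_shifted_path_minor:
  assumes c_C: "c \<in> C" and c_first: "N $$ (r 0, c) \<noteq> 0"
  shows "det (sq_minor N K r (prepend c s)) \<in> {1,-1}"
proof -
  let ?L = "sq_minor N K r (prepend c s)"
  have "upper_triangular ?L" unfolding upper_triangular_def
  proof (intro allI impI)
    fix i j assume ij: "i < dim_row ?L" "j < i"
    then show "?L $$ (i,j) = 0"
      using path_row_zero[of i c] c_C chordless[of i "j - 1"] by (cases "j = 0") (auto simp: prepend_def)
  qed
  then have "det ?L = prod_list (diag_mat ?L)" using det_upper_triangular sq_minor_carrier by blast
  moreover have "?L $$ (t,t) \<in> {1,-1}" if t: "t < K" for t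
  proof (cases "t = 0")
    case True then show ?thesis using nonzero_entry_pm1 c_first c_C C_sub path_rows t by auto
  next
    case False
    then have "N $$ (r t, s (t - 1)) \<noteq> 0" using path_subdiag[of "t - 1"] t by simp
    then show ?thesis using t False nonzero_entry_pm1 path_rows path_cols by (simp add: prepend_def)
  qed
  then have "\<forall>x\<in>set (diag_mat ?L). x \<in> {1,-1}" by (auto simp: diag_mat_def)
  ultimately show ?thesis using prod_list_pm1 by auto
qed

context
  fixes a b c d :: nat
  assumes a_R: "a \<in> R" and a_last: "N $$ (a, s (K - 1)) \<noteq> 0"
    and b_R: "b \<in> R" and b_last: "N $$ (b, s (K - 1)) = 0"
    and c_C: "c \<in> C" and c_first: "N $$ (r 0, c) \<noteq> 0"
    and d_C: "d \<in> C" and d_first: "N $$ (r 0, d) = 0"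
begin

lemma frame_bounds: "a < m" "b < m" "c < n" "d < n" "a \<noteq> b" "c \<noteq> d"
  using a_R b_R c_C d_C R_sub C_sub a_last b_last c_first d_first by auto

lemma frame_entries_pm1:
  "N $$ (a,c) \<in> {1,-1}" "N $$ (a,d) \<in> {1,-1}" "N $$ (b,c) \<in> {1,-1}" "N $$ (b,d) \<in> {1,-1}"
  "N $$ (a, s (K - 1)) \<in> {1,-1}"
  using nonzero_entry_pm1 frame_bounds block_nz a_R b_R c_C d_C a_last path_cols K_pos by auto

text \<open>The cycle through a, the path and c: row a meets only c and the last path column.\<close>
lemma det_cycle_minor:
  "det (sq_minor N (Suc K) (prepend a r) (prepend c s)) =
   N $$ (a,c) * det (sq_minor N K r s) + N $$ (a, s (K - 1)) * ((-1)^K * det (sq_minor N K r (prepend c s)))"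
proof -
  have last: "prepend c s K = s (K - 1)" using K_pos by (simp add: prepend_def)
  have "det (sq_minor N (Suc K) (prepend a r) (prepend c s)) =
      (\<Sum>j<Suc K. N $$ (a, prepend c s j) *
        ((-1)^j * det (sq_minor N K r (\<lambda>t. prepend c s (insert_index j t)))))"
    by (subst det_sq_minor_expand_row[of 0]) simp_all
  also have "\<dots> = N $$ (a, prepend c s 0) * ((-1)^0 * det (sq_minor N K r (\<lambda>t. prepend c s (insert_index 0 t)))) +
      N $$ (a, prepend c s K) * ((-1)^K * det (sq_minor N K r (\<lambda>t. prepend c s (insert_index K t))))"
  proof (rule sum_two_terms)
    fix j assume j: "j < Suc K" "j \<noteq> 0" "j \<noteq> K"
    then have "N $$ (a, s (j - 1)) = 0" using path_col_zero a_R by simp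
    then show "N $$ (a, prepend c s j) * ((-1)^j * det (sq_minor N K r (\<lambda>t. prepend c s (insert_index j t)))) = 0"
      using j by (simp add: prepend_def)
  qed (use K_pos in auto)
  also have "sq_minor N K r (\<lambda>t. prepend c s (insert_index K t)) = sq_minor N K r (prepend c s)"
    by (rule sq_minor_cong) (auto simp: insert_index_below)
  finally show ?thesis using last by simp
qed

text \<open>Since N is TU, the two terms of the cycle determinant (each +-1) must cancel.\<close>
lemma cycle_relation:
  "N $$ (a,c) * det (sq_minor N K r s) = - (N $$ (a, s (K - 1)) * ((-1)^K * det (sq_minor N K r (prepend c s))))"
proof -
  have "det (sq_minor N (Suc K) (prepend a r) (prepend c s)) \<in> {-1,0,1}"
    using TU_det_sq_minor[OF TU] prepend_row[OF a_R] prepend_col[OF c_C] by simp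
  moreover have "N $$ (a,c) * det (sq_minor N K r s) \<in> {1,-1}"
    using frame_entries_pm1 det_path_minor by auto
  moreover have "(-1::real)^K \<in> {1,-1}" by (cases "even K") auto
  then have "N $$ (a, s (K - 1)) * ((-1)^K * det (sq_minor N K r (prepend c s))) \<in> {1,-1}"
    using frame_entries_pm1 det_shifted_path_minor[OF c_C c_first] by auto
  ultimately show ?thesis unfolding det_cycle_minor by auto
qed

text \<open>Replacing a by b: row b meets only c, since it misses the last path column.\<close>
lemma det_minor_b_c: "det (sq_minor N (Suc K) (prepend b r) (prepend c s)) = N $$ (b,c) * det (sq_minor N K r s)"
proof -
  have "det (sq_minor N (Suc K) (prepend b r) (prepend c s)) =
      (\<Sum>j<Suc K. N $$ (b, prepend c s j) *
        ((-1)^j * det (sq_minor N K r (\<lambda>t. prepend c s (insert_index j t)))))"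
    by (subst det_sq_minor_expand_row[of 0]) simp_all
  also have "\<dots> = N $$ (b, prepend c s 0) * ((-1)^0 * det (sq_minor N K r (\<lambda>t. prepend c s (insert_index 0 t))))"
  proof (rule sum_single_term)
    fix j assume j: "j < Suc K" "j \<noteq> 0"
    have "N $$ (b, s (j - 1)) = 0"
      using b_last path_col_zero[of "j - 1" b] b_R j by (cases "j = K") auto
    then show "N $$ (b, prepend c s j) * ((-1)^j * det (sq_minor N K r (\<lambda>t. prepend c s (insert_index j t)))) = 0"
      using j by (simp add: prepend_def)
  qed simp
  finally show ?thesis by simp
qed

text \<open>Rows b, r 0, ..., r (K-1) against columns c, d, s 0, ..., s (K-2): column d meets
  only row b, since r 0 misses d and the later path rows vanish on C.\<close>
lemma det_minor_b_cd:
  "det (sq_minor N (Suc K) (prepend b r) (prepend c (prepend d s))) = - (N $$ (b,d) * det (sq_minor N K r (prepend c s)))"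
proof -
  have "det (sq_minor N (Suc K) (prepend b r) (prepend c (prepend d s))) =
      (\<Sum>i<Suc K. N $$ (prepend b r i, d) *
        ((-1)^(i+1) * det (sq_minor N K (\<lambda>t. prepend b r (insert_index i t)) (prepend c s))))"
    by (subst det_sq_minor_expand_col[of 1]) (use K_pos in simp_all)
  also have "\<dots> = N $$ (prepend b r 0, d) * ((-1)^(0+1) * det (sq_minor N K (\<lambda>t. prepend b r (insert_index 0 t)) (prepend c s)))"
  proof (rule sum_single_term)
    fix i assume i: "i < Suc K" "i \<noteq> 0"
    have "N $$ (r (i - 1), d) = 0"
      using d_first path_row_zero[of "i - 1" d] d_C i by (cases "i = 1") auto
    then show "N $$ (prepend b r i, d) * ((-1)^(i+1) * det (sq_minor N K (\<lambda>t. prepend b r (insert_index i t)) (prepend c s))) = 0"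
      using i by (simp add: prepend_def)
  qed simp
  finally show ?thesis by simp
qed

text \<open>The witness against strong unimodularity: rows a, b and the path rows against columns
  c, d and the path columns, in N with the entry (a,c) set to zero.  Row a then meets only d
  and the last path column.\<close>
lemma det_zeroed_minor_expand:
  "det (sq_minor (zero_entry N a c) (Suc (Suc K)) (prepend a (prepend b r)) (prepend c (prepend d s))) =
   N $$ (a,d) * (- det (sq_minor N (Suc K) (prepend b r) (prepend c s))) +
   N $$ (a, s (K - 1)) * ((-1)^(Suc K) * det (sq_minor N (Suc K) (prepend b r) (prepend c (prepend d s))))"
proof -
  let ?N' = "zero_entry N a c" and ?cols = "prepend c (prepend d s)"
  have row_a: "?N' $$ (a, x) = N $$ (a,x)" if "x < n" "x \<noteq> c" for x
    using that frame_bounds by (simp add: zero_entry_index)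
  have avoid_a: "sq_minor ?N' (Suc K) (prepend b r) f = sq_minor N (Suc K) (prepend b r) f"
    if "\<And>t. t < Suc K \<Longrightarrow> f t < n" for f
    by (rule sq_minor_zero_entry) (use that frame_bounds path_rows a_R in \<open>auto simp: prepend_def\<close>)
  have minor_bc: "sq_minor ?N' (Suc K) (prepend b r) (prepend c s) = sq_minor N (Suc K) (prepend b r) (prepend c s)"
    by (rule avoid_a) (use frame_bounds path_cols in \<open>auto simp: prepend_def\<close>)
  have minor_bcd: "sq_minor ?N' (Suc K) (prepend b r) ?cols = sq_minor N (Suc K) (prepend b r) ?cols"
    by (rule avoid_a) (use frame_bounds path_cols in \<open>auto simp: prepend_def\<close>)
  have entry_ag: "?N' $$ (a, s (K - 1)) = N $$ (a, s (K - 1))"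
    using row_a path_cols[of "K - 1"] K_pos c_C by auto
  have "det (sq_minor ?N' (Suc (Suc K)) (prepend a (prepend b r)) ?cols) =
      (\<Sum>j<Suc (Suc K). ?N' $$ (a, ?cols j) *
        ((-1)^j * det (sq_minor ?N' (Suc K) (prepend b r) (\<lambda>t. ?cols (insert_index j t)))))"
    by (subst det_sq_minor_expand_row[of 0]) simp_all
  also have "\<dots> = ?N' $$ (a, ?cols 1) * ((-1)^1 * det (sq_minor ?N' (Suc K) (prepend b r) (\<lambda>t. ?cols (insert_index 1 t)))) +
      ?N' $$ (a, ?cols (Suc K)) * ((-1)^(Suc K) * det (sq_minor ?N' (Suc K) (prepend b r) (\<lambda>t. ?cols (insert_index (Suc K) t))))"
  proof (rule sum_two_terms)
    fix j assume j: "j < Suc (Suc K)" "j \<noteq> 1" "j \<noteq> Suc K"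
    have "?N' $$ (a, ?cols j) = 0"
    proof (cases "j = 0")
      case True then show ?thesis using frame_bounds by (simp add: zero_entry_index)
    next
      case False
      then have j2: "Suc (j - 2) < K" using j by simp
      then have "N $$ (a, s (j - 2)) = 0" using path_col_zero a_R by blast
      moreover have "s (j - 2) < n" "s (j - 2) \<noteq> c" using path_cols[of "j - 2"] j2 c_C by auto
      ultimately show ?thesis using row_a False j by (simp add: prepend_def numeral_2_eq_2)
    qed
    then show "?N' $$ (a, ?cols j) * ((-1)^j * det (sq_minor ?N' (Suc K) (prepend b r) (\<lambda>t. ?cols (insert_index j t)))) = 0"
      by simp
  qed (use K_pos in auto)
  also have "sq_minor ?N' (Suc K) (prepend b r) (\<lambda>t. ?cols (insert_index (Suc K) t)) =
      sq_minor ?N' (Suc K) (prepend b r) ?cols"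
    by (rule sq_minor_cong) (auto simp: insert_index_below)
  finally have expand: "det (sq_minor ?N' (Suc (Suc K)) (prepend a (prepend b r)) ?cols) =
      ?N' $$ (a, ?cols 1) * ((-1)^1 * det (sq_minor ?N' (Suc K) (prepend b r) (prepend c s))) +
      ?N' $$ (a, ?cols (Suc K)) * ((-1)^(Suc K) * det (sq_minor ?N' (Suc K) (prepend b r) ?cols))"
    by simp
  have "?cols 1 = d" "?cols (Suc K) = s (K - 1)" using K_pos by (simp_all add: prepend_def)
  then show ?thesis unfolding expand minor_bc minor_bcd
    using entry_ag row_a[of d] frame_bounds by simp
qed

text \<open>Combining the expansions with the cycle relation and the rank-one block: the zeroed
  minor has determinant -2 N(a,c) N(b,d) det(path minor), which is +-2.\<close>
lemma det_zeroed_minor: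
  "det (sq_minor (zero_entry N a c) (Suc (Suc K)) (prepend a (prepend b r)) (prepend c (prepend d s))) =
   - 2 * (N $$ (a,c) * N $$ (b,d) * det (sq_minor N K r s))"
proof -
  have block: "N $$ (a,c) * N $$ (b,d) = N $$ (b,c) * N $$ (a,d)"
    by (rule TU_nonzero_2x2_rank_one[OF TU]) (use frame_bounds block_nz a_R b_R c_C d_C in auto)
  let ?L = "det (sq_minor N K r s)" and ?L' = "det (sq_minor N K r (prepend c s))"
  have "N $$ (a, s (K - 1)) * ((-1)^(Suc K) * (- (N $$ (b,d) * ?L'))) =
      N $$ (b,d) * (N $$ (a, s (K - 1)) * ((-1)^K * ?L'))"
    by simp
  also have "\<dots> = - (N $$ (b,d) * (N $$ (a,c) * ?L))" using cycle_relation by simp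
  finally have second: "N $$ (a, s (K - 1)) * ((-1)^(Suc K) * (- (N $$ (b,d) * ?L'))) =
      - (N $$ (a,c) * N $$ (b,d) * ?L)"
    by (simp add: algebra_simps)
  have first: "N $$ (a,d) * (- (N $$ (b,c) * ?L)) = - (N $$ (a,c) * N $$ (b,d) * ?L)"
    using block by (simp add: algebra_simps)
  show ?thesis unfolding det_zeroed_minor_expand det_minor_b_c det_minor_b_cd first second by simp
qed

lemma not_strongly_unimodular: "\<not> strongly_unimodular N"
proof
  assume SU: "strongly_unimodular N"
  have a_new: "a \<notin> prepend b r ` {..<Suc K}"
    unfolding prepend_image using frame_bounds path_rows a_R by auto
  have c_new: "c \<notin> prepend d s ` {..<Suc K}"
    unfolding prepend_image using frame_bounds path_cols c_C by auto
  have "totally_unimodular (zero_entry N a c)"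
    using SU frame_entries_pm1(1) frame_bounds unfolding strongly_unimodular_def by auto
  moreover have "inj_on (prepend a (prepend b r)) {..<Suc (Suc K)}"
    "prepend a (prepend b r) ` {..<Suc (Suc K)} \<subseteq> {..<m}"
    using inj_prepend[OF _ a_new] prepend_row[OF b_R] frame_bounds by (auto simp: prepend_image)
  moreover have "inj_on (prepend c (prepend d s)) {..<Suc (Suc K)}"
    "prepend c (prepend d s) ` {..<Suc (Suc K)} \<subseteq> {..<n}"
    using inj_prepend[OF _ c_new] prepend_col[OF d_C] frame_bounds by (auto simp: prepend_image)
  ultimately have "det (sq_minor (zero_entry N a c) (Suc (Suc K))
      (prepend a (prepend b r)) (prepend c (prepend d s))) \<in> {-1,0,1}"
    using TU_det_sq_minor by simp
  moreover have "N $$ (a,c) * N $$ (b,d) * det (sq_minor N K r s) \<in> {1,-1}"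
    using frame_entries_pm1 det_path_minor by auto
  ultimately show False unfolding det_zeroed_minor by auto
qed

end

text \<open>The closing rows and columns exist by maximality of the block.\<close>
theorem chordless_bridge_not_SU: "\<not> strongly_unimodular N"
proof -
  obtain c where "c \<in> C" "N $$ (r 0, c) \<noteq> 0" using first_row unfolding R1_def by blast
  moreover obtain d where "d \<in> C" "N $$ (r 0, d) = 0" using R_maximal first_row unfolding R1_def by blast
  moreover obtain a where "a \<in> R" "N $$ (a, s (K - 1)) \<noteq> 0" using last_col unfolding C1_def by blast
  moreover obtain b where "b \<in> R" "N $$ (b, s (K - 1)) = 0" using C_maximal last_col unfolding C1_def by blast
  ultimately show ?thesis using not_strongly_unimodular by blast
qed

end

theorem (in maximal_block) not_SU_if_3_connected:
  assumes "matroid_connected 3 (id_append N)"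
  shows "\<not> strongly_unimodular N"
proof (cases bridge)
  case True
  obtain K r s where "bridge_path K r s"
    and "\<And>i j. i < K \<Longrightarrow> j < K \<Longrightarrow> j \<noteq> i \<Longrightarrow> Suc j \<noteq> i \<Longrightarrow> N $$ (r i, s j) = 0"
    by (rule chordless_bridge_path_exists[OF True]) blast
  then have "chordless_bridge N m n R C K r s"
    using maximal_block_axioms by (simp add: chordless_bridge_def chordless_bridge_axioms_def)
  then show ?thesis by (rule chordless_bridge.chordless_bridge_not_SU)
next
  case False
  then show ?thesis using no_bridge_not_3_connected assms by blast
qed

text \<open>Any 2x2 block of nonzero entries of a TU matrix extends to a maximal block: take a block
  containing it with card R + card C as large as possible.\<close>
lemma maximal_block_exists:
  assumes carrier: "N \<in> carrier_mat m n" and TU: "totally_unimodular N"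
    and rows: "i1 < m" "i2 < m" "i1 \<noteq> i2" and cols: "j1 < n" "j2 < n" "j1 \<noteq> j2"
    and nonzero: "N $$ (i1,j1) \<noteq> 0" "N $$ (i1,j2) \<noteq> 0" "N $$ (i2,j1) \<noteq> 0" "N $$ (i2,j2) \<noteq> 0"
  shows "\<exists>R C. maximal_block N m n R C"
proof -
  define blocks where "blocks = {(R,C). R \<subseteq> {..<m} \<and> C \<subseteq> {..<n} \<and> 2 \<le> card R \<and> 2 \<le> card C \<and>
      (\<forall>i\<in>R. \<forall>j\<in>C. N $$ (i,j) \<noteq> 0)}"
  define weight where "weight = (\<lambda>(R::nat set, C::nat set). card R + card C)"
  have start: "({i1,i2},{j1,j2}) \<in> blocks" unfolding blocks_def using rows cols nonzero by auto
  have "blocks \<subseteq> Pow {..<m} \<times> Pow {..<n}" unfolding blocks_def by auto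
  then have fin_blocks: "finite blocks" using finite_subset by blast
  then have "Max (weight ` blocks) \<in> weight ` blocks" using start by (intro Max_in) auto
  then obtain R C where RC: "(R,C) \<in> blocks" and max: "weight (R,C) = Max (weight ` blocks)" by auto
  have largest: "\<And>B. B \<in> blocks \<Longrightarrow> weight B \<le> weight (R,C)"
    unfolding max using fin_blocks by simp
  have R_sub: "R \<subseteq> {..<m}" and C_sub: "C \<subseteq> {..<n}" using RC unfolding blocks_def by auto
  then have fin: "finite R" "finite C" using finite_subset by auto
  have "maximal_block N m n R C"
  proof
    fix i assume i: "i < m" "i \<notin> R"
    show "\<exists>j\<in>C. N $$ (i,j) = 0"
    proof (rule ccontr)
      assume "\<not> (\<exists>j\<in>C. N $$ (i,j) = 0)"
      then have "(insert i R, C) \<in> blocks" using RC i fin unfolding blocks_def by (auto simp: card_insert_if)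
      from largest[OF this] show False using i fin by (simp add: weight_def)
    qed
  next
    fix j assume j: "j < n" "j \<notin> C"
    show "\<exists>i\<in>R. N $$ (i,j) = 0"
    proof (rule ccontr)
      assume "\<not> (\<exists>i\<in>R. N $$ (i,j) = 0)"
      then have "(R, insert j C) \<in> blocks" using RC j fin unfolding blocks_def by (auto simp: card_insert_if)
      from largest[OF this] show False using j fin by (simp add: weight_def)
    qed
  qed (use carrier TU RC in \<open>simp_all add: blocks_def\<close>)
  then show ?thesis by blast
qed

text \<open>The main theorem.\<close>
theorem mainTheorem10:
  fixes N :: "real mat" and m n :: nat
  assumes "N \<in> carrier_mat m n" and "m \<ge> 3" and "n \<ge> 3"
    and "totally_unimodular N"
    and "matroid_connected 3 (id_append N)"
    and "\<exists>i1 i2 j1 j2 r1 r2 c1 c2.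
           i1 < m \<and> i2 < m \<and> i1 \<noteq> i2 \<and> j1 < n \<and> j2 < n \<and> j1 \<noteq> j2 \<and>
           r1 \<in> {1, -1} \<and> r2 \<in> {1, -1} \<and> c1 \<in> {1, -1} \<and> c2 \<in> {1, -1} \<and>
           N $$ (i1, j1) = r1 * c1 \<and> N $$ (i1, j2) = r1 * c2 \<and>
           N $$ (i2, j1) = r2 * c1 \<and> N $$ (i2, j2) = r2 * c2"
  shows "\<not> strongly_unimodular N"
proof -
  obtain i1 i2 j1 j2 :: nat and r1 r2 c1 c2 :: real where
    idx: "i1 < m" "i2 < m" "i1 \<noteq> i2" "j1 < n" "j2 < n" "j1 \<noteq> j2"
    and signs: "r1 \<in> {1, -1}" "r2 \<in> {1, -1}" "c1 \<in> {1, -1}" "c2 \<in> {1, -1}"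
    and entries: "N $$ (i1, j1) = r1 * c1" "N $$ (i1, j2) = r1 * c2"
      "N $$ (i2, j1) = r2 * c1" "N $$ (i2, j2) = r2 * c2"
    using assms(6) by blast
  have "N $$ (i1,j1) \<noteq> 0" "N $$ (i1,j2) \<noteq> 0" "N $$ (i2,j1) \<noteq> 0" "N $$ (i2,j2) \<noteq> 0"
    using signs unfolding entries by auto
  then obtain R C where "maximal_block N m n R C"
    using maximal_block_exists[OF assms(1,4) idx] by blast
  then show ?thesis using maximal_block.not_SU_if_3_connected assms(5) by blast
qed

end
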